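(* Let $H$ be the lower Vietoris monad on $\mathbf{Top}$. For every topological space $X$, the equalizer of $\eta_{HX},H\eta_X:HX\to HHX$ is the subspace $DX\subseteq HX$ consisting of the irreducible closed subsets of $X$, with $\theta_X:DX\to HX$ the inclusion.
   Context: $HX$ is the set of closed subsets of $X$ (including $\emptyset$) with topology generated by the sets $\{C: C\cap U\neq\emptyset\}$ for $U\subseteq X$ open; $\eta_X(x)=\overline{\{x\}}$; $\mu_X(\mathcal{C})=\overline{\bigcup_{C\in\mathcal{C}}C}$; $Hf(C)=\overline{f(C)}$. A closed subset $C$ is irreducible if it is nonempty and is not the union of two closed proper subsets of $C$. *)

theory Defs
  imports "HOL-Analysis.Analysis"
begin

text \<open>The whole carrier is added
  to the subbasis so that the empty set belongs to the topspace (it is open anyway).\<close>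
definition lower_vietoris :: "'a topology \<Rightarrow> 'a set topology" where
  "lower_vietoris X = topology_generated_by
     (insert {C. closedin X C} {{C. closedin X C \<and> C \<inter> U \<noteq> {}} | U. openin X U})"

definition vietoris_unit :: "'a topology \<Rightarrow> 'a \<Rightarrow> 'a set" where
  "vietoris_unit X x = X closure_of {x}"

definition vietoris_map :: "'b topology \<Rightarrow> ('a \<Rightarrow> 'b) \<Rightarrow> 'a set \<Rightarrow> 'b set" where
  "vietoris_map Y f C = Y closure_of (f ` C)"

definition irreducible_closed :: "'a topology \<Rightarrow> 'a set \<Rightarrow> bool" where
  "irreducible_closed X C \<longleftrightarrow> closedin X C \<and> C \<noteq> {} \<and>
     \<not> (\<exists>A B. closedin X A \<and> closedin X B \<and> A \<subset> C \<and> B \<subset> C \<and> C = A \<union> B)"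

definition irreducible_space :: "'a topology \<Rightarrow> 'a set topology" where
  "irreducible_space X = subtopology (lower_vietoris X) {C. irreducible_closed X C}"

end

theory Submission
  imports Defs
begin

text \<open>For a closed set C, the equalizer condition says that the closures of {C} and of
  \<open>\<eta>`C\<close> in HX agree. The closure of {C} consists of the closed subsets of C and contains
  \<open>\<eta>`C\<close>, so the condition reduces to C lying in the closure of \<open>\<eta>`C\<close>. As the basic
  neighbourhoods of C are given by finitely many opens U1, ..., Un meeting C, this says that
  C meets every such U1 \<inter> ... \<inter> Un, which is irreducibility. Since DX carries the subspace
  topology, a map into HX factors through DX exactly when its values are irreducible.\<close>

lemma closure_of_eq_closure_of_singleton_iff:
  assumes "a \<in> topspace T" "S \<subseteq> T closure_of {a}"
  shows "T closure_of S = T closure_of {a} \<longleftrightarrow> a \<in> T closure_of S"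
proof
  assume "T closure_of S = T closure_of {a}"
  then show "a \<in> T closure_of S"
    using assms(1) closure_of_subset[of "{a}" T] by auto
next
  assume "a \<in> T closure_of S"
  then have "T closure_of {a} \<subseteq> T closure_of S"
    by (intro closure_of_minimal) auto
  moreover have "T closure_of S \<subseteq> T closure_of {a}"
    using assms(2) by (intro closure_of_minimal) auto
  ultimately show "T closure_of S = T closure_of {a}"
    by blast
qed

lemma topspace_lower_vietoris: "topspace (lower_vietoris X) = {C. closedin X C}"
  unfolding lower_vietoris_def by auto

lemma openin_lower_vietoris_hitting:
  "openin X U \<Longrightarrow> openin (lower_vietoris X) {C. closedin X C \<and> C \<inter> U \<noteq> {}}"
  unfolding lower_vietoris_def by (rule topology_generated_by_Basis) auto

lemma lower_vietoris_neighbourhood_base: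
  assumes "openin (lower_vietoris X) W" "D \<in> W"
  shows "\<exists>\<U>. finite \<U> \<and> (\<forall>U\<in>\<U>. openin X U \<and> D \<inter> U \<noteq> {})
           \<and> {E. closedin X E \<and> (\<forall>U\<in>\<U>. E \<inter> U \<noteq> {})} \<subseteq> W"
  using assms(1)[unfolded lower_vietoris_def openin_topology_generated_by_iff] assms(2)
proof (induction arbitrary: D rule: generate_topology_on.induct)
  case Empty
  then show ?case
    by simp
next
  case (Int A B)
  have "D \<in> A" "D \<in> B"
    using Int.prems by auto
  obtain \<U>\<^sub>1 where \<U>\<^sub>1: "finite \<U>\<^sub>1" "\<forall>U\<in>\<U>\<^sub>1. openin X U \<and> D \<inter> U \<noteq> {}"
    "{E. closedin X E \<and> (\<forall>U\<in>\<U>\<^sub>1. E \<inter> U \<noteq> {})} \<subseteq> A"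
    using Int.IH(1)[OF \<open>D \<in> A\<close>] by blast
  obtain \<U>\<^sub>2 where \<U>\<^sub>2: "finite \<U>\<^sub>2" "\<forall>U\<in>\<U>\<^sub>2. openin X U \<and> D \<inter> U \<noteq> {}"
    "{E. closedin X E \<and> (\<forall>U\<in>\<U>\<^sub>2. E \<inter> U \<noteq> {})} \<subseteq> B"
    using Int.IH(2)[OF \<open>D \<in> B\<close>] by blast
  have "{E. closedin X E \<and> (\<forall>U\<in>\<U>\<^sub>1 \<union> \<U>\<^sub>2. E \<inter> U \<noteq> {})} \<subseteq> A \<inter> B"
    using \<U>\<^sub>1(3) \<U>\<^sub>2(3) by blast
  with \<U>\<^sub>1(1,2) \<U>\<^sub>2(1,2) show ?case
    by (intro exI[of _ "\<U>\<^sub>1 \<union> \<U>\<^sub>2"]) (simp add: ball_Un)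
next
  case (UN K)
  from UN.prems obtain V where V: "V \<in> K" "D \<in> V"
    by blast
  from UN.IH[OF V] obtain \<U> where "finite \<U>" "\<forall>U\<in>\<U>. openin X U \<and> D \<inter> U \<noteq> {}"
    "{E. closedin X E \<and> (\<forall>U\<in>\<U>. E \<inter> U \<noteq> {})} \<subseteq> V"
    by blast
  with V show ?case
    by (intro exI[of _ \<U>]) blast
next
  case (Basis V)
  show ?case
  proof (cases "V = {C. closedin X C}")
    case True
    then show ?thesis
      by (intro exI[of _ "{}"]) auto
  next
    case False
    with Basis.hyps obtain U where "openin X U" "V = {C. closedin X C \<and> C \<inter> U \<noteq> {}}"
      by auto
    with Basis.prems show ?thesis
      by (intro exI[of _ "{U}"]) auto
  qed
qed

lemma lower_vietoris_closure_of_singleton: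
  assumes "closedin X C"
  shows "lower_vietoris X closure_of {C} = {D. closedin X D \<and> D \<subseteq> C}"
proof (intro equalityI subsetI)
  fix D assume "D \<in> lower_vietoris X closure_of {C}"
  then have D: "closedin X D"
    "\<And>W. openin (lower_vietoris X) W \<Longrightarrow> D \<in> W \<Longrightarrow> C \<in> W"
    by (auto simp: in_closure_of topspace_lower_vietoris)
  have "x \<in> C" if "x \<in> D" for x
  proof (rule ccontr)
    assume "x \<notin> C"
    have "openin (lower_vietoris X) {E. closedin X E \<and> E \<inter> (topspace X - C) \<noteq> {}}"
      using assms by (simp add: openin_lower_vietoris_hitting openin_diff)
    moreover have "x \<in> topspace X"
      using closedin_subset[OF D(1)] \<open>x \<in> D\<close> by blast
    with \<open>x \<in> D\<close> \<open>x \<notin> C\<close> D(1) have "D \<in> {E. closedin X E \<and> E \<inter> (topspace X - C) \<noteq> {}}"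
      by blast
    ultimately have "C \<in> {E. closedin X E \<and> E \<inter> (topspace X - C) \<noteq> {}}"
      by (rule D(2))
    then show False
      by blast
  qed
  with D(1) show "D \<in> {D. closedin X D \<and> D \<subseteq> C}"
    by blast
next
  fix D assume D: "D \<in> {D. closedin X D \<and> D \<subseteq> C}"
  have "C \<in> W" if W: "openin (lower_vietoris X) W" "D \<in> W" for W
  proof -
    obtain \<U> where "\<forall>U\<in>\<U>. D \<inter> U \<noteq> {}"
      "{E. closedin X E \<and> (\<forall>U\<in>\<U>. E \<inter> U \<noteq> {})} \<subseteq> W"
      using lower_vietoris_neighbourhood_base[OF W] by blast
    moreover from this(1) D have "\<forall>U\<in>\<U>. C \<inter> U \<noteq> {}"
      by blast
    ultimately show ?thesis
      using assms by blast
  qed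
  moreover have "D \<in> topspace (lower_vietoris X)"
    using D by (simp add: topspace_lower_vietoris)
  ultimately show "D \<in> lower_vietoris X closure_of {C}"
    unfolding in_closure_of by blast
qed

lemma irreducible_closed_Int_open:
  assumes "irreducible_closed X C" "openin X U" "openin X V" "C \<inter> U \<noteq> {}" "C \<inter> V \<noteq> {}"
  shows "C \<inter> U \<inter> V \<noteq> {}"
proof
  assume "C \<inter> U \<inter> V = {}"
  then have "C = (C - U) \<union> (C - V)"
    by blast
  moreover have "closedin X (C - U)" "closedin X (C - V)"
    using assms(1-3) by (auto simp: irreducible_closed_def closedin_diff)
  moreover have "C - U \<subset> C" "C - V \<subset> C"
    using assms(4,5) by blast+
  ultimately show False
    using assms(1) unfolding irreducible_closed_def by blast
qed

lemma irreducible_closed_Inter_open: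
  assumes "irreducible_closed X C" "finite \<U>" "\<forall>U\<in>\<U>. openin X U \<and> C \<inter> U \<noteq> {}"
  shows "C \<inter> (topspace X \<inter> \<Inter>\<U>) \<noteq> {}"
  using assms(2,3)
proof (induction \<U> rule: finite_induct)
  case empty
  then show ?case
    using assms(1) closedin_subset by (fastforce simp: irreducible_closed_def)
next
  case (insert U \<U>)
  have "openin X (topspace X \<inter> \<Inter>\<U>)"
    using insert openin_Inter[of \<U> X] by (cases "\<U> = {}") (auto simp: Int_absorb1 openin_subset)
  then have "C \<inter> (topspace X \<inter> \<Inter>\<U>) \<inter> U \<noteq> {}"
    using irreducible_closed_Int_open[OF assms(1)] insert by simp
  then show ?case
    by blast
qed

lemma irreducible_closed_iff_in_closure_of_units:
  assumes "closedin X C"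
  shows "irreducible_closed X C \<longleftrightarrow> C \<in> lower_vietoris X closure_of (vietoris_unit X ` C)"
proof
  assume irr: "irreducible_closed X C"
  have "\<exists>y. y \<in> vietoris_unit X ` C \<and> y \<in> W" if W: "openin (lower_vietoris X) W" "C \<in> W" for W
  proof -
    obtain \<U> where \<U>: "finite \<U>" "\<forall>U\<in>\<U>. openin X U \<and> C \<inter> U \<noteq> {}"
      "{E. closedin X E \<and> (\<forall>U\<in>\<U>. E \<inter> U \<noteq> {})} \<subseteq> W"
      using lower_vietoris_neighbourhood_base[OF W] by blast
    from irreducible_closed_Inter_open[OF irr \<U>(1,2)]
    obtain x where x: "x \<in> C" "x \<in> topspace X" "\<forall>U\<in>\<U>. x \<in> U"
      by blast
    then have "x \<in> X closure_of {x}"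
      using closure_of_subset[of "{x}" X] by simp
    with x(3) have "X closure_of {x} \<in> {E. closedin X E \<and> (\<forall>U\<in>\<U>. E \<inter> U \<noteq> {})}"
      by auto
    with x(1) \<U>(3) show ?thesis
      unfolding vietoris_unit_def by blast
  qed
  with assms show "C \<in> lower_vietoris X closure_of (vietoris_unit X ` C)"
    by (simp add: in_closure_of topspace_lower_vietoris)
next
  assume C: "C \<in> lower_vietoris X closure_of (vietoris_unit X ` C)"
  have "C \<noteq> {}"
    using C by auto
  moreover have False
    if AB: "closedin X A" "closedin X B" "A \<subset> C" "B \<subset> C" "C = A \<union> B" for A B
  proof -
    define W where "W = {E. closedin X E \<and> E \<inter> (topspace X - A) \<noteq> {}}
                      \<inter> {E. closedin X E \<and> E \<inter> (topspace X - B) \<noteq> {}}"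
    have "openin (lower_vietoris X) W"
      unfolding W_def using AB by (intro openin_Int openin_lower_vietoris_hitting openin_diff) auto
    moreover have "C \<in> W"
      unfolding W_def using AB assms closedin_subset[OF assms] by blast
    ultimately have "\<exists>y. y \<in> vietoris_unit X ` C \<and> y \<in> W"
      using C unfolding in_closure_of by blast
    then obtain x where x: "x \<in> C" "X closure_of {x} \<in> W"
      unfolding vietoris_unit_def by blast
    have "X closure_of {x} \<subseteq> A \<or> X closure_of {x} \<subseteq> B"
      using x(1) AB closure_of_minimal[of "{x}" A X] closure_of_minimal[of "{x}" B X] by blast
    with x(2) show False
      unfolding W_def by blast
  qed
  ultimately show "irreducible_closed X C"
    using assms unfolding irreducible_closed_def by blast
qed

lemma lower_vietoris_equalizer_iff_irreducible:
  assumes "closedin X C"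
  shows "vietoris_unit (lower_vietoris X) C = vietoris_map (lower_vietoris X) (vietoris_unit X) C
         \<longleftrightarrow> irreducible_closed X C"
proof -
  have "C \<in> topspace (lower_vietoris X)"
    using assms by (simp add: topspace_lower_vietoris)
  moreover have "vietoris_unit X ` C \<subseteq> lower_vietoris X closure_of {C}"
    using assms closure_of_minimal[of _ C X]
    by (auto simp: lower_vietoris_closure_of_singleton vietoris_unit_def)
  ultimately have "lower_vietoris X closure_of (vietoris_unit X ` C) = lower_vietoris X closure_of {C}
      \<longleftrightarrow> irreducible_closed X C"
    using assms
    by (simp add: closure_of_eq_closure_of_singleton_iff irreducible_closed_iff_in_closure_of_units)
  then show ?thesis
    unfolding vietoris_unit_def[of "lower_vietoris X"] vietoris_map_def by auto
qed

lemma topspace_irreducible_space: "topspace (irreducible_space X) = {C. irreducible_closed X C}"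
  by (auto simp: irreducible_space_def topspace_lower_vietoris irreducible_closed_def)

lemma continuous_map_irreducible_space_iff:
  "continuous_map Z (irreducible_space X) f \<longleftrightarrow>
     continuous_map Z (lower_vietoris X) f
     \<and> (\<forall>z\<in>topspace Z. vietoris_unit (lower_vietoris X) (f z)
                        = vietoris_map (lower_vietoris X) (vietoris_unit X) (f z))"
proof -
  have "(\<forall>z\<in>topspace Z. irreducible_closed X (f z)) \<longleftrightarrow>
        (\<forall>z\<in>topspace Z. vietoris_unit (lower_vietoris X) (f z)
                        = vietoris_map (lower_vietoris X) (vietoris_unit X) (f z))"
    if f: "continuous_map Z (lower_vietoris X) f"
  proof -
    have "closedin X (f z)" if "z \<in> topspace Z" for z
      using continuous_map_image_subset_topspace[OF f] that by (auto simp: topspace_lower_vietoris)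
    then show ?thesis
      by (simp add: lower_vietoris_equalizer_iff_irreducible)
  qed
  then show ?thesis
    unfolding irreducible_space_def continuous_map_in_subtopology by (auto simp: Pi_iff)
qed

theorem theorem5p8:
  fixes X :: "'a topology"
  shows "continuous_map (irreducible_space X) (lower_vietoris X) (\<lambda>C. C)
   \<and> (\<forall>C\<in>topspace (irreducible_space X).
        vietoris_unit (lower_vietoris X) C
        = vietoris_map (lower_vietoris X) (vietoris_unit X) C)
   \<and> (\<forall>(Z :: 'z topology) f.
        continuous_map Z (lower_vietoris X) f
        \<and> (\<forall>z\<in>topspace Z. vietoris_unit (lower_vietoris X) (f z)
                          = vietoris_map (lower_vietoris X) (vietoris_unit X) (f z))
        \<longrightarrow> (\<exists>g. continuous_map Z (irreducible_space X) g
                \<and> (\<forall>z\<in>topspace Z. g z = f z)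
                \<and> (\<forall>g'. continuous_map Z (irreducible_space X) g'
                        \<and> (\<forall>z\<in>topspace Z. g' z = f z)
                        \<longrightarrow> (\<forall>z\<in>topspace Z. g' z = g z))))"
proof (intro conjI)
  show "continuous_map (irreducible_space X) (lower_vietoris X) (\<lambda>C. C)"
    unfolding irreducible_space_def by (simp add: continuous_map_from_subtopology)
  show "\<forall>C\<in>topspace (irreducible_space X).
      vietoris_unit (lower_vietoris X) C = vietoris_map (lower_vietoris X) (vietoris_unit X) C"
    by (simp add: topspace_irreducible_space lower_vietoris_equalizer_iff_irreducible
        irreducible_closed_def)
qed (use continuous_map_irreducible_space_iff in blast)

end
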